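(* Assume the setting described in the context and suppose the event $\mathcal{E}$ holds. There is an absolute constant $C>0$ such that for any $\gamma\in(0,1)$, if $$ m\ \ge\ C\frac{(1+\theta)^2}{\theta^2(1-\gamma)^2}s^2(1)\log n, $$ then the set $S^{(1)}=\{j^\ast\}$, where $j^\ast$ maximizes $|\hat{\boldsymbol{\Gamma}}_{jj}|$ over $j\in[n]$, satisfies $$ \|\mathbf{v}_{S^{(1)}}\|_2\ \ge\ \sqrt{\frac{\gamma}{s(1)}}. $$
   Context: Let $n\ge 2$, $m\ge1$, $\theta>0$, $k\in[n]$; $\mathbf{v}\in\mathbb{R}^n$ a unit vector with at most $k$ nonzero entries; $\mathbf{x}_1,\dots,\mathbf{x}_m$ i.i.d. $\mathcal{N}(\mathbf{0},\mathbf{I}_n+\theta\mathbf{v}\mathbf{v}^\top)$; $\hat{\boldsymbol{\Gamma}}=\frac1m\sum_i\mathbf{x}_i\mathbf{x}_i^\top-\mathbf{I}_n$; $\mathbf{W}=\hat{\boldsymbol{\Gamma}}-\theta\mathbf{v}\mathbf{v}^\top$. $\mathbf{v}_S$ is the restriction of $\mathbf{v}$ to $S$, $\mathbf{W}_{S,S}$ a principal submatrix, $\|\cdot\|_2$ Euclidean/spectral norm. $v_{(1)}\ge v_{(2)}\ge\cdots$ are the sorted absolute entries of $\mathbf{v}$ and $s(p)=(\sum_{i=1}^pv_{(i)}^2)^{-1}$; in particular $s(1)=v_{(1)}^{-2}$. Fix an absolute constant $C_0>0$; $\mathcal{E}$ is the event that $\|\mathbf{W}_{S,S}\|_2\le C_0(1+\theta)\sqrt{|S|\log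 n/m}$ for all nonempty $S\subseteq[n]$. Absolute constants do not depend on $n,m,k,\theta,\mathbf{v},\gamma$. *)

theory Defs
  imports "HOL-Analysis.Analysis"
begin

text \<open>Conventions: [n] is rendered as the index set {..<n}. Vectors in R^n are
  functions nat => real (only entries with index < n matter), n x n matrices are
  functions nat => nat => real, and the m samples are x :: nat => nat => real with
  x i the i-th sample (i < m), x i j its j-th coordinate (j < n).\<close>

definition Gamma_hat :: "nat \<Rightarrow> (nat \<Rightarrow> nat \<Rightarrow> real) \<Rightarrow> nat \<Rightarrow> nat \<Rightarrow> real" where
  "Gamma_hat m x j l = (1 / real m) * (\<Sum>i<m. x i j * x i l) - (if j = l then 1 else 0)"

definition W_mat :: "nat \<Rightarrow> (nat \<Rightarrow> nat \<Rightarrow> real) \<Rightarrow> real \<Rightarrow> (nat \<Rightarrow> real) \<Rightarrow> nat \<Rightarrow> nat \<Rightarrow> real" where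
  "W_mat m x \<theta> v j l = Gamma_hat m x j l - \<theta> * v j * v l"

definition sub_spec_norm :: "(nat \<Rightarrow> nat \<Rightarrow> real) \<Rightarrow> nat set \<Rightarrow> real" where
  "sub_spec_norm A S = Sup {sqrt (\<Sum>i\<in>S. (\<Sum>j\<in>S. A i j * u j)^2) | u. (\<Sum>j\<in>S. (u j)^2) = 1}"

definition restr_norm :: "(nat \<Rightarrow> real) \<Rightarrow> nat set \<Rightarrow> real" where
  "restr_norm v S = sqrt (\<Sum>j\<in>S. (v j)^2)"

text \<open>Sorted absolute entries v_(1) >= v_(2) >= ... (list index 0 is v_(1)).\<close>
definition sorted_abs :: "nat \<Rightarrow> (nat \<Rightarrow> real) \<Rightarrow> real list" where
  "sorted_abs n v = rev (sort (map (\<lambda>i. \<bar>v i\<bar>) [0..<n]))"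

definition s_fun :: "nat \<Rightarrow> (nat \<Rightarrow> real) \<Rightarrow> nat \<Rightarrow> real" where
  "s_fun n v p = 1 / (\<Sum>i<p. (sorted_abs n v ! i)^2)"

definition event_E :: "real \<Rightarrow> nat \<Rightarrow> nat \<Rightarrow> real \<Rightarrow> (nat \<Rightarrow> real) \<Rightarrow> (nat \<Rightarrow> nat \<Rightarrow> real) \<Rightarrow> bool" where
  "event_E C0 n m \<theta> v x \<longleftrightarrow>
     (\<forall>S. S \<subseteq> {..<n} \<and> S \<noteq> {} \<longrightarrow>
        sub_spec_norm (W_mat m x \<theta> v) S \<le> C0 * (1 + \<theta>) * sqrt (real (card S) * ln (real n) / real m))"

end

theory Submission
  imports Defs
begin

text \<open>The diagonal entry \<open>\<Gamma>\<^sub>j\<^sub>j\<close> is \<open>\<theta> v\<^sub>j\<^sup>2\<close> plus the noise \<open>W\<^sub>j\<^sub>j\<close>, which the event E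
  for the singleton \<open>S = {j}\<close> bounds by \<open>\<epsilon> = C\<^sub>0 (1 + \<theta>) sqrt (log n / m)\<close>.
  Comparing the maximiser \<open>j\<^sup>*\<close> with an index \<open>i\<close> attaining v_(1) gives
  \<open>\<theta> v\<^sub>j\<^sub>*\<^sup>2 \<ge> \<theta> v\<^sub>i\<^sup>2 - 2\<epsilon>\<close>, and the sample size (with \<open>C = 4 C\<^sub>0\<^sup>2\<close>) is exactly what
  makes \<open>2\<epsilon> \<le> (1 - \<gamma>) \<theta> v\<^sub>i\<^sup>2\<close>.\<close>

lemma sub_spec_norm_singleton: "sub_spec_norm A {j} = \<bar>A j j\<bar>"
proof -
  have "{sqrt (\<Sum>i\<in>{j}. (\<Sum>l\<in>{j}. A i l * u l)\<^sup>2) | u. (\<Sum>l\<in>{j}. (u l)\<^sup>2) = 1} = {\<bar>A j j\<bar>}"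
  proof (intro set_eqI iffI)
    fix z
    assume "z \<in> {sqrt (\<Sum>i\<in>{j}. (\<Sum>l\<in>{j}. A i l * u l)\<^sup>2) | u. (\<Sum>l\<in>{j}. (u l)\<^sup>2) = 1}"
    then obtain u where u: "(u j)\<^sup>2 = 1" "z = sqrt ((A j j * u j)\<^sup>2)" by auto
    from u(1) have "\<bar>u j\<bar> = 1" by (auto simp: power2_eq_1_iff)
    with u(2) show "z \<in> {\<bar>A j j\<bar>}" by (simp add: abs_mult)
  qed (auto intro!: exI[of _ "\<lambda>_. 1"])
  then show ?thesis unfolding sub_spec_norm_def by simp
qed

lemma event_E_diag_bound:
  assumes "event_E C0 n m \<theta> v x" and "j < n"
  shows "\<bar>W_mat m x \<theta> v j j\<bar> \<le> C0 * (1 + \<theta>) * sqrt (ln (real n) / real m)"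
proof -
  have "sub_spec_norm (W_mat m x \<theta> v) {j}
      \<le> C0 * (1 + \<theta>) * sqrt (real (card {j}) * ln (real n) / real m)"
    using assms unfolding event_E_def by blast
  then show ?thesis by (simp add: sub_spec_norm_singleton)
qed

lemma Gamma_hat_diag: "Gamma_hat m x j j = \<theta> * (v j)\<^sup>2 + W_mat m x \<theta> v j j"
  unfolding W_mat_def by (simp add: power2_eq_square)

lemma s_fun_one_attained:
  assumes "0 < n"
  obtains i where "i < n" and "s_fun n v 1 = 1 / (v i)\<^sup>2"
proof -
  have "sorted_abs n v ! 0 \<in> set (sorted_abs n v)"
    using assms unfolding sorted_abs_def by (intro nth_mem) simp
  then obtain i where "i < n" "sorted_abs n v ! 0 = \<bar>v i\<bar>"
    unfolding sorted_abs_def by auto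
  then show ?thesis using that unfolding s_fun_def by simp
qed

lemma argmax_abs_perturbed_ge:
  fixes a w :: "'a \<Rightarrow> real"
  assumes noise: "\<And>j. j \<in> J \<Longrightarrow> \<bar>w j\<bar> \<le> \<epsilon>"
    and nonneg: "\<And>j. j \<in> J \<Longrightarrow> 0 \<le> a j"
    and "i \<in> J" "j' \<in> J"
    and argmax: "\<And>j. j \<in> J \<Longrightarrow> \<bar>a j + w j\<bar> \<le> \<bar>a j' + w j'\<bar>"
  shows "a i - 2 * \<epsilon> \<le> a j'"
proof -
  have "a i - \<epsilon> \<le> \<bar>a i + w i\<bar>" using noise[OF \<open>i \<in> J\<close>] by linarith
  also have "\<dots> \<le> \<bar>a j' + w j'\<bar>" using argmax[OF \<open>i \<in> J\<close>] .
  also have "\<dots> \<le> a j' + \<epsilon>" using noise[OF \<open>j' \<in> J\<close>] nonneg[OF \<open>j' \<in> J\<close>] by linarith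
  finally show ?thesis by simp
qed

lemma mult_sqrt_div_le:
  fixes c g L m :: real
  assumes "0 \<le> c" "0 < g" "0 \<le> L" "0 < m" and "c\<^sup>2 * L / g\<^sup>2 \<le> m"
  shows "c * sqrt (L / m) \<le> g"
proof -
  have "(c * sqrt (L / m))\<^sup>2 = c\<^sup>2 * L / m"
    using assms(3,4) by (simp add: power_mult_distrib)
  also have "\<dots> \<le> g\<^sup>2"
    using assms(2,4,5) by (simp add: field_simps)
  finally show ?thesis
    by (rule power2_le_imp_le) (use assms(2) in simp)
qed

lemma noise_le_gap_of_sample_size:
  fixes c \<theta> \<gamma> a L m :: real
  assumes "0 \<le> c" "0 < \<theta>" "\<gamma> < 1" "a \<noteq> 0" "0 \<le> L" "0 < m"
    and "4 * c\<^sup>2 * (1 + \<theta>)\<^sup>2 / (\<theta>\<^sup>2 * (1 - \<gamma>)\<^sup>2) * (1 / a\<^sup>2)\<^sup>2 * L \<le> m"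
  shows "2 * (c * (1 + \<theta>) * sqrt (L / m)) \<le> \<theta> * (1 - \<gamma>) * a\<^sup>2"
proof -
  have "4 * c\<^sup>2 * (1 + \<theta>)\<^sup>2 / (\<theta>\<^sup>2 * (1 - \<gamma>)\<^sup>2) * (1 / a\<^sup>2)\<^sup>2 * L
      = (2 * c * (1 + \<theta>))\<^sup>2 * L / (\<theta> * (1 - \<gamma>) * a\<^sup>2)\<^sup>2"
    by (simp add: power_mult_distrib power_divide)
  with assms have "2 * c * (1 + \<theta>) * sqrt (L / m) \<le> \<theta> * (1 - \<gamma>) * a\<^sup>2"
    by (intro mult_sqrt_div_le) simp_all
  then show ?thesis by (simp add: mult.assoc)
qed

theorem proposition3:
  fixes C0 :: real
  assumes "C0 > 0"
  shows "\<exists>C>0. \<forall>(n::nat) (m::nat) (\<theta>::real) (k::nat) (v::nat \<Rightarrow> real)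
            (x::nat \<Rightarrow> nat \<Rightarrow> real) (\<gamma>::real) (jstar::nat).
     n \<ge> 2 \<longrightarrow> m \<ge> 1 \<longrightarrow> \<theta> > 0 \<longrightarrow> 1 \<le> k \<longrightarrow> k \<le> n \<longrightarrow>
     (\<Sum>i<n. (v i)^2) = 1 \<longrightarrow> card {i. i < n \<and> v i \<noteq> 0} \<le> k \<longrightarrow>
     event_E C0 n m \<theta> v x \<longrightarrow>
     0 < \<gamma> \<longrightarrow> \<gamma> < 1 \<longrightarrow>
     real m \<ge> C * (1 + \<theta>)^2 / (\<theta>^2 * (1 - \<gamma>)^2) * (s_fun n v 1)^2 * ln (real n) \<longrightarrow>
     jstar < n \<longrightarrow> (\<forall>j<n. \<bar>Gamma_hat m x j j\<bar> \<le> \<bar>Gamma_hat m x jstar jstar\<bar>) \<longrightarrow>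
     restr_norm v {jstar} \<ge> sqrt (\<gamma> / s_fun n v 1)"
proof (rule exI[of _ "4 * C0\<^sup>2"], intro conjI allI impI)
  show "0 < 4 * C0\<^sup>2" using assms by simp
  fix n m k jstar :: nat and \<theta> \<gamma> :: real and v x
  assume "n \<ge> 2" "m \<ge> 1" "\<theta> > 0" "event_E C0 n m \<theta> v x" "0 < \<gamma>" "\<gamma> < 1"
    and m_large: "real m \<ge> 4 * C0\<^sup>2 * (1 + \<theta>)\<^sup>2 / (\<theta>\<^sup>2 * (1 - \<gamma>)\<^sup>2) * (s_fun n v 1)\<^sup>2 * ln (real n)"
    and "jstar < n" and argmax: "\<forall>j<n. \<bar>Gamma_hat m x j j\<bar> \<le> \<bar>Gamma_hat m x jstar jstar\<bar>"
  obtain i where "i < n" and s1: "s_fun n v 1 = 1 / (v i)\<^sup>2"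
    using s_fun_one_attained[of n v] \<open>n \<ge> 2\<close> by auto
  define \<epsilon> where "\<epsilon> = C0 * (1 + \<theta>) * sqrt (ln (real n) / real m)"
  have gap: "\<theta> * (v i)\<^sup>2 - 2 * \<epsilon> \<le> \<theta> * (v jstar)\<^sup>2"
    by (rule argmax_abs_perturbed_ge[where J = "{..<n}" and a = "\<lambda>j. \<theta> * (v j)\<^sup>2"
          and w = "\<lambda>j. W_mat m x \<theta> v j j"])
      (use event_E_diag_bound[OF \<open>event_E C0 n m \<theta> v x\<close>] argmax \<open>\<theta> > 0\<close> \<open>i < n\<close> \<open>jstar < n\<close>
        in \<open>auto simp: \<epsilon>_def Gamma_hat_diag[of m x _ \<theta> v]\<close>)
  show "restr_norm v {jstar} \<ge> sqrt (\<gamma> / s_fun n v 1)"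
  proof (cases "v i = 0")
    case True
    \<comment> \<open>then \<open>s(1) = 1 / 0 = 0\<close> in HOL and the claimed bound is \<open>sqrt 0\<close>\<close>
    then show ?thesis unfolding s1 restr_norm_def by simp
  next
    case False
    have "2 * \<epsilon> \<le> \<theta> * (1 - \<gamma>) * (v i)\<^sup>2"
      unfolding \<epsilon>_def
      using m_large[unfolded s1] False \<open>\<theta> > 0\<close> \<open>\<gamma> < 1\<close> \<open>n \<ge> 2\<close> \<open>m \<ge> 1\<close> \<open>C0 > 0\<close>
      by (intro noise_le_gap_of_sample_size) simp_all
    with gap have "\<theta> * (\<gamma> * (v i)\<^sup>2) \<le> \<theta> * (v jstar)\<^sup>2"
      by (simp add: algebra_simps)
    with \<open>\<theta> > 0\<close> have "\<gamma> * (v i)\<^sup>2 \<le> (v jstar)\<^sup>2"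
      by simp
    then show ?thesis
      unfolding s1 restr_norm_def by (simp flip: real_sqrt_abs add: real_sqrt_le_mono)
  qed
qed

end
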